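(* For any entrywise nonnegative ${\mathbf\Lambda},{\mathbf V}$ and any $\alpha>0$, $$\sqrt{\sum_{\ell\in[\![L]\!],\,s\in[K]}\big(\mathcal U_s(\hat\pi_{{\mathbf\Lambda},{\mathbf V}},\ell)-\epsilon_s\big)_+^2}\le\|\mathbf G_{\hat F,\alpha}({\mathbf\Lambda},{\mathbf V})\|+\big(\mathbb E\|\hat{\mathbf t}(X)-\mathbf t(X)\|^2\big)^{1/2}.$$
   Context: Let $K\ge 2$, $d\ge1$, and let $(X,S,Y)$ be a random triple with values in $\mathbb R^d\times[K]\times\mathbb R$. Put $p_s=\mathbb P(S=s)>0$, $\tau_s(x)=\mathbb P(S=s\mid X=x)$, $t_s(x)=1-\tau_s(x)/p_s$, $\mathbf t=(t_s)_{s\in[K]}$. Fix $B>0$, $L\in\mathbb N$, $\beta>0$, $\boldsymbol\epsilon=(\epsilon_s)\in[0,1]^K$, $[\![L]\!]=\{-L,\dots,L\}$. Let $\hat\eta:\mathbb R^d\to\mathbb R$ and $\hat{\boldsymbol\tau}=(\hat\tau_s)_{s}:\mathbb R^d\to[0,1]^K$ be fixed (deterministic) measurable functions with $\mathbb E[\hat\eta(X)^2]<\infty$; set $\hat t_s(x)=1-\hat\tau_s(x)/p_s$, $\hat{\mathbf t}=(\hat t_s)_s$, $\hat r_\ell(x)=(\hat\eta(x)-\ell B/L)^2$. $\mathrm{LSE}_\beta(\mathbf w)=\beta^{-1}\log\sum_j e^{\beta w_j}$, $\sigma_j(\mathbf w)=e^{w_j}/\sum_ie^{w_i}$. For ${\mathbf\Lambda}=(\lambda_{\ell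 s}),{\mathbf V}=(\nu_{\ell s})$ with rows $\boldsymbol\lambda_\ell,\boldsymbol\nu_\ell\in\mathbb R^K$: $\hat F({\mathbf\Lambda},{\mathbf V})=\mathbb E\big[\mathrm{LSE}_\beta\big((\langle\boldsymbol\lambda_\ell-\boldsymbol\nu_\ell,\hat{\mathbf t}(X)\rangle-\hat r_\ell(X))_{\ell\in[\![L]\!]}\big)\big]+\sum_\ell\langle\boldsymbol\lambda_\ell+\boldsymbol\nu_\ell,\boldsymbol\epsilon\rangle$ and $\hat\pi_{{\mathbf\Lambda},{\mathbf V}}(\ell\mid x)=\sigma_\ell\big(\beta(\langle\boldsymbol\lambda_{\ell'}-\boldsymbol\nu_{\ell'},\hat{\mathbf t}(x)\rangle-\hat r_{\ell'}(x))_{\ell'\in[\![L]\!]}\big)$, a randomized prediction putting mass $\hat\pi_{{\mathbf\Lambda},{\mathbf V}}(\ell\mid x)$ on $\ell B/L$. For such a grid-supported $\pi$, $\mathcal U_s(\pi,\ell)=|\mathbb E[\pi(\ell\mid X)\mid S=s]-\mathbb E[\pi(\ell\mid X)]|$. $(a)_+=\max(a,0)$ entrywise; gradient mapping $\mathbf G_{\hat F,\alpha}({\mathbf\Lambda},{\mathbf V})=\alpha^{-1}[({\mathbf\Lambda},{\mathbf V})-(({\mathbf\Lambda},{\mathbf V})-\alpha\nabla\hat F({\mathbf\Lambda},{\mathbf V}))_+]$; $\|\cdot\|$ is the Euclidean norm. *)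

theory Defs
  imports "HOL-Probability.Probability"
begin

definition grid :: "nat \<Rightarrow> int set" where
  "grid L = {- int L .. int L}"

definition LSE :: "real \<Rightarrow> 'i set \<Rightarrow> ('i \<Rightarrow> real) \<Rightarrow> real" where
  "LSE \<beta> I w = ln (\<Sum>j\<in>I. exp (\<beta> * w j)) / \<beta>"

definition softmax :: "'i set \<Rightarrow> ('i \<Rightarrow> real) \<Rightarrow> 'i \<Rightarrow> real" where
  "softmax I w j = exp (w j) / (\<Sum>i\<in>I. exp (w i))"

definition pS :: "'w measure \<Rightarrow> ('w \<Rightarrow> nat) \<Rightarrow> nat \<Rightarrow> real" where
  "pS M S s = measure M {\<omega> \<in> space M. S \<omega> = s}"

(* tau is a version of x |-> P(S = s | X = x), for s in [K] *)
definition is_cond_prob :: "'w measure \<Rightarrow> ('w \<Rightarrow> 'x::topological_space) \<Rightarrow> ('w \<Rightarrow> nat) \<Rightarrow> nat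
    \<Rightarrow> ('x \<Rightarrow> nat \<Rightarrow> real) \<Rightarrow> bool" where
  "is_cond_prob M X S K \<tau> \<longleftrightarrow>
     (\<forall>s\<in>{1..K}. (\<lambda>x. \<tau> x s) \<in> borel_measurable borel \<and> (\<forall>x. 0 \<le> \<tau> x s \<and> \<tau> x s \<le> 1) \<and>
        (\<forall>A\<in>sets borel. measure M {\<omega> \<in> space M. S \<omega> = s \<and> X \<omega> \<in> A}
                          = (\<integral>\<omega>. \<tau> (X \<omega>) s * indicator A (X \<omega>) \<partial>M)))"

definition tfun :: "(nat \<Rightarrow> real) \<Rightarrow> ('x \<Rightarrow> nat \<Rightarrow> real) \<Rightarrow> 'x \<Rightarrow> nat \<Rightarrow> real" where
  "tfun p \<tau> x s = 1 - \<tau> x s / p s"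

definition score :: "nat \<Rightarrow> real \<Rightarrow> nat \<Rightarrow> ('x \<Rightarrow> real) \<Rightarrow> ('x \<Rightarrow> nat \<Rightarrow> real)
    \<Rightarrow> (int \<Rightarrow> nat \<Rightarrow> real) \<Rightarrow> (int \<Rightarrow> nat \<Rightarrow> real) \<Rightarrow> 'x \<Rightarrow> int \<Rightarrow> real" where
  "score K B L \<eta> th \<Lambda> V x l =
     (\<Sum>s\<in>{1..K}. (\<Lambda> l s - V l s) * th x s) - (\<eta> x - real_of_int l * B / real L)\<^sup>2"

definition Fhat :: "'w measure \<Rightarrow> ('w \<Rightarrow> 'x) \<Rightarrow> nat \<Rightarrow> real \<Rightarrow> nat \<Rightarrow> real \<Rightarrow> (nat \<Rightarrow> real)
    \<Rightarrow> ('x \<Rightarrow> real) \<Rightarrow> ('x \<Rightarrow> nat \<Rightarrow> real)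
    \<Rightarrow> (int \<Rightarrow> nat \<Rightarrow> real) \<Rightarrow> (int \<Rightarrow> nat \<Rightarrow> real) \<Rightarrow> real" where
  "Fhat M X K B L \<beta> \<epsilon> \<eta> th \<Lambda> V =
     (\<integral>\<omega>. LSE \<beta> (grid L) (score K B L \<eta> th \<Lambda> V (X \<omega>)) \<partial>M)
     + (\<Sum>l\<in>grid L. \<Sum>s\<in>{1..K}. (\<Lambda> l s + V l s) * \<epsilon> s)"

definition pihat :: "nat \<Rightarrow> real \<Rightarrow> nat \<Rightarrow> real \<Rightarrow> ('x \<Rightarrow> real) \<Rightarrow> ('x \<Rightarrow> nat \<Rightarrow> real)
    \<Rightarrow> (int \<Rightarrow> nat \<Rightarrow> real) \<Rightarrow> (int \<Rightarrow> nat \<Rightarrow> real) \<Rightarrow> 'x \<Rightarrow> int \<Rightarrow> real" where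
  "pihat K B L \<beta> \<eta> th \<Lambda> V x l =
     softmax (grid L) (\<lambda>l'. \<beta> * score K B L \<eta> th \<Lambda> V x l') l"

definition unfair :: "'w measure \<Rightarrow> ('w \<Rightarrow> 'x) \<Rightarrow> ('w \<Rightarrow> nat) \<Rightarrow> ('x \<Rightarrow> int \<Rightarrow> real)
    \<Rightarrow> nat \<Rightarrow> int \<Rightarrow> real" where
  "unfair M X S \<pi> s l =
     \<bar>(\<integral>\<omega>. \<pi> (X \<omega>) l * indicator {\<omega>' \<in> space M. S \<omega>' = s} \<omega> \<partial>M) / pS M S s
      - (\<integral>\<omega>. \<pi> (X \<omega>) l \<partial>M)\<bar>"

definition upd :: "(int \<Rightarrow> nat \<Rightarrow> real) \<Rightarrow> int \<Rightarrow> nat \<Rightarrow> real \<Rightarrow> int \<Rightarrow> nat \<Rightarrow> real" where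
  "upd A l s h = (\<lambda>l' s'. if l' = l \<and> s' = s then A l' s' + h else A l' s')"

definition gradL :: "((int \<Rightarrow> nat \<Rightarrow> real) \<Rightarrow> (int \<Rightarrow> nat \<Rightarrow> real) \<Rightarrow> real)
    \<Rightarrow> (int \<Rightarrow> nat \<Rightarrow> real) \<Rightarrow> (int \<Rightarrow> nat \<Rightarrow> real) \<Rightarrow> int \<Rightarrow> nat \<Rightarrow> real" where
  "gradL F \<Lambda> V l s = deriv (\<lambda>h. F (upd \<Lambda> l s h) V) 0"

definition gradV :: "((int \<Rightarrow> nat \<Rightarrow> real) \<Rightarrow> (int \<Rightarrow> nat \<Rightarrow> real) \<Rightarrow> real)
    \<Rightarrow> (int \<Rightarrow> nat \<Rightarrow> real) \<Rightarrow> (int \<Rightarrow> nat \<Rightarrow> real) \<Rightarrow> int \<Rightarrow> nat \<Rightarrow> real" where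
  "gradV F \<Lambda> V l s = deriv (\<lambda>h. F \<Lambda> (upd V l s h)) 0"

definition gradmap_norm :: "nat \<Rightarrow> nat \<Rightarrow> ((int \<Rightarrow> nat \<Rightarrow> real) \<Rightarrow> (int \<Rightarrow> nat \<Rightarrow> real) \<Rightarrow> real)
    \<Rightarrow> real \<Rightarrow> (int \<Rightarrow> nat \<Rightarrow> real) \<Rightarrow> (int \<Rightarrow> nat \<Rightarrow> real) \<Rightarrow> real" where
  "gradmap_norm K L F \<alpha> \<Lambda> V = sqrt (\<Sum>l\<in>grid L. \<Sum>s\<in>{1..K}.
      ((\<Lambda> l s - max 0 (\<Lambda> l s - \<alpha> * gradL F \<Lambda> V l s)) / \<alpha>)\<^sup>2
    + ((V l s - max 0 (V l s - \<alpha> * gradV F \<Lambda> V l s)) / \<alpha>)\<^sup>2)"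

end

theory Submission
  imports Defs
begin

text \<open>
  Write \<open>a l s\<close> and \<open>b l s\<close> for the expectations of \<open>\<pi>(l | X)\<close> times the estimated and the true
  \<open>t\<^sub>s(X)\<close>. The partial derivatives of \<open>Fhat\<close> in \<open>\<lambda>\<^sub>l\<^sub>s\<close> and \<open>\<nu>\<^sub>l\<^sub>s\<close> are \<open>\<epsilon>\<^sub>s + a l s\<close> and
  \<open>\<epsilon>\<^sub>s - a l s\<close>; differentiating under the integral is justified by the uniform quadratic
  remainder of log-sum-exp along a coordinate direction. For nonnegative multipliers the two
  entries of the gradient mapping at \<open>(l, s)\<close> dominate \<open>(\<bar>a l s\<bar> - \<epsilon>\<^sub>s)\<^sub>+\<close>. On the other hand
  \<open>U\<^sub>s(\<pi>, l) = \<bar>b l s\<bar>\<close> because \<open>\<tau>\<^sub>s\<close> is the conditional probability of \<open>S = s\<close> given \<open>X\<close>.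
  Jensen's inequality and \<open>\<Sum>\<^sub>l \<pi>(l | x) = 1\<close> bound \<open>\<Sum> (a l s - b l s)\<^sup>2\<close> by the mean squared
  error of the estimated \<open>t\<close>, and the triangle inequality in \<open>\<ell>\<^sup>2\<close> combines the two estimates.
\<close>

lemma exp_le_quadratic:
  fixes y :: real
  assumes "\<bar>y\<bar> \<le> 1"
  shows "exp y \<le> 1 + y + y\<^sup>2"
proof (cases "y \<ge> 0")
  case True
  then show ?thesis using exp_bound[of y] assms by simp
next
  case False
  define u where "u = - y"
  have u: "0 < u" "u \<le> 1" using False assms by (auto simp: u_def)
  have pos: "0 < 1 - u + u\<^sup>2" using u zero_less_power[of u 2] by linarith
  have "1 \<le> 1 + u ^ 3" using u by simp
  also have "\<dots> = (1 + u) * (1 - u + u\<^sup>2)" by (simp add: algebra_simps power2_eq_square power3_eq_cube)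
  also have "\<dots> \<le> exp u * (1 - u + u\<^sup>2)"
    using exp_ge_add_one_self[of u] pos by (intro mult_right_mono) auto
  finally have "exp (- u) \<le> 1 - u + u\<^sup>2" by (simp add: exp_minus field_simps)
  then show ?thesis by (simp add: u_def)
qed

lemma ln_convex_comb_exp_bounds:
  fixes p y :: real
  assumes "0 \<le> p" "p \<le> 1"
  shows ln_convex_comb_exp_pos: "0 < 1 - p + p * exp y"
    and ln_convex_comb_exp_lower: "p * y \<le> ln (1 - p + p * exp y)"
    and ln_convex_comb_exp_upper: "ln (1 - p + p * exp y) \<le> p * (exp y - 1)"
proof -
  have "exp ((1 - p) *\<^sub>R 0 + p *\<^sub>R y) \<le> (1 - p) * exp 0 + p * exp y"
    using assms by (intro convex_onD[OF exp_convex]) auto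
  then have exp_le: "exp (p * y) \<le> 1 - p + p * exp y" by simp
  then show pos: "0 < 1 - p + p * exp y" by (rule less_le_trans[OF exp_gt_zero])
  show "p * y \<le> ln (1 - p + p * exp y)" using exp_le pos by (subst ln_ge_iff) auto
  show "ln (1 - p + p * exp y) \<le> p * (exp y - 1)"
    using ln_le_minus_one[OF pos] by (simp add: algebra_simps)
qed

lemma abs_ln_convex_comb_exp_le:
  fixes p y :: real
  assumes "0 \<le> p" "p \<le> 1"
  shows "\<bar>ln (1 - p + p * exp y)\<bar> \<le> \<bar>y\<bar>"
proof -
  have "\<bar>p * y\<bar> \<le> \<bar>y\<bar>" using assms by (simp add: abs_mult mult_left_le_one_le)
  then have "- \<bar>y\<bar> \<le> p * y" by linarith
  moreover have "ln (1 - p + p * exp y) \<le> \<bar>y\<bar>"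
  proof -
    have "(1 - p) * 1 + p * exp y \<le> (1 - p) * exp \<bar>y\<bar> + p * exp \<bar>y\<bar>"
      using assms by (intro add_mono mult_left_mono) auto
    then have "1 - p + p * exp y \<le> exp \<bar>y\<bar>" by (simp add: algebra_simps)
    then show ?thesis
      using ln_le_cancel_iff[of _ "exp \<bar>y\<bar>"] ln_convex_comb_exp_pos[OF assms] by simp
  qed
  ultimately show ?thesis using ln_convex_comb_exp_lower[OF assms, of y] by linarith
qed

lemma ln_convex_comb_exp_remainder:
  fixes p y :: real
  assumes "0 \<le> p" "p \<le> 1" "\<bar>y\<bar> \<le> 1"
  shows "\<bar>ln (1 - p + p * exp y) - p * y\<bar> \<le> y\<^sup>2"
proof -
  have "0 \<le> exp y - 1 - y" using exp_ge_add_one_self[of y] by linarith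
  then have "p * (exp y - 1 - y) \<le> exp y - 1 - y" using assms by (simp add: mult_left_le_one_le)
  also have "\<dots> \<le> y\<^sup>2" using exp_le_quadratic[OF assms(3)] by simp
  moreover have "ln (1 - p + p * exp y) - p * y \<le> p * (exp y - 1 - y)"
    using ln_convex_comb_exp_upper[OF assms(1,2), of y] by (simp add: algebra_simps)
  ultimately show ?thesis using ln_convex_comb_exp_lower[OF assms(1,2), of y] by linarith
qed

lemma has_real_derivative_at_0_if_quadratic_remainder:
  fixes f :: "real \<Rightarrow> real"
  assumes "0 < \<delta>" and remainder: "\<And>h. \<bar>h\<bar> < \<delta> \<Longrightarrow> \<bar>f h - f 0 - A * h\<bar> \<le> C * h\<^sup>2"
  shows "(f has_real_derivative A) (at 0)"
proof -
  have "norm ((f h - f 0) / (h - 0) - A) \<le> C * \<bar>h\<bar>" if "h \<noteq> 0" "\<bar>h\<bar> < \<delta>" for h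
  proof -
    have "(f h - f 0) / (h - 0) - A = (f h - f 0 - A * h) / h"
      using \<open>h \<noteq> 0\<close> by (simp add: field_simps)
    then show ?thesis
      using remainder[OF that(2)] that(1)
      by (simp add: abs_div divide_le_eq power2_eq_square abs_mult mult.assoc)
  qed
  then have "eventually (\<lambda>h. norm ((f h - f 0) / (h - 0) - A) \<le> C * \<bar>h\<bar>) (at (0::real))"
    using assms(1) unfolding eventually_at by (auto simp: dist_real_def)
  moreover have "((\<lambda>h::real. C * \<bar>h\<bar>) \<longlongrightarrow> 0) (at 0)"
    by (auto intro!: tendsto_eq_intros)
  ultimately have "((\<lambda>h. (f h - f 0) / (h - 0) - A) \<longlongrightarrow> 0) (at 0)"
    by (rule Lim_null_comparison)
  then show ?thesis by (simp add: has_field_derivative_iff Lim_null[symmetric])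
qed

section \<open>Softmax and log-sum-exp\<close>

lemma softmax_nonneg: "0 \<le> softmax I w j"
  unfolding softmax_def by (simp add: sum_nonneg)

lemma softmax_le_1:
  assumes "finite I" "j \<in> I"
  shows "softmax I w j \<le> 1"
proof -
  have "exp (w j) \<le> (\<Sum>i\<in>I. exp (w i))" using assms by (intro member_le_sum) auto
  moreover from this have "0 < (\<Sum>i\<in>I. exp (w i))" by (rule less_le_trans[OF exp_gt_zero])
  ultimately show ?thesis unfolding softmax_def by (simp add: divide_le_eq_1)
qed

lemma sum_softmax:
  assumes "finite I" "I \<noteq> {}"
  shows "(\<Sum>j\<in>I. softmax I w j) = 1"
proof -
  have "0 < (\<Sum>i\<in>I. exp (w i))" using assms by (intro sum_pos) auto
  then show ?thesis unfolding softmax_def by (simp add: sum_divide_distrib[symmetric])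
qed

lemma LSE_add_single:
  fixes w :: "'i \<Rightarrow> real"
  assumes "finite I" "l \<in> I" "\<beta> > 0"
  defines "p \<equiv> softmax I (\<lambda>j. \<beta> * w j) l"
  shows "LSE \<beta> I (\<lambda>j. w j + (if j = l then d else 0)) = LSE \<beta> I w + ln (1 - p + p * exp (\<beta> * d)) / \<beta>"
proof -
  define Z where "Z = (\<Sum>j\<in>I. exp (\<beta> * w j))"
  have Z_pos: "0 < Z" unfolding Z_def using assms by (intro sum_pos) auto
  have "(\<Sum>j\<in>I. exp (\<beta> * (w j + (if j = l then d else 0))))
      = (\<Sum>j\<in>I. exp (\<beta> * w j) + (if j = l then exp (\<beta> * w l) * (exp (\<beta> * d) - 1) else 0))"
    by (intro sum.cong) (auto simp: distrib_left exp_add algebra_simps)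
  also have "\<dots> = Z * (1 - p + p * exp (\<beta> * d))"
    using assms Z_pos by (simp add: sum.distrib Z_def p_def softmax_def field_simps)
  finally have sum_eq: "(\<Sum>j\<in>I. exp (\<beta> * (w j + (if j = l then d else 0)))) = Z * (1 - p + p * exp (\<beta> * d))" .
  have "0 < 1 - p + p * exp (\<beta> * d)"
    using assms by (intro ln_convex_comb_exp_pos) (auto simp: softmax_nonneg softmax_le_1)
  then show ?thesis
    unfolding LSE_def sum_eq using Z_pos by (simp add: ln_mult Z_def add_divide_distrib)
qed

lemma LSE_add_single_bounds:
  fixes w :: "'i \<Rightarrow> real"
  assumes "finite I" "l \<in> I" "\<beta> > 0"
  defines "p \<equiv> softmax I (\<lambda>j. \<beta> * w j) l"
  shows LSE_add_single_lipschitz: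
      "\<bar>LSE \<beta> I (\<lambda>j. w j + (if j = l then d else 0)) - LSE \<beta> I w\<bar> \<le> \<bar>d\<bar>"
    and LSE_add_single_remainder: "\<bar>\<beta> * d\<bar> \<le> 1 \<Longrightarrow>
      \<bar>LSE \<beta> I (\<lambda>j. w j + (if j = l then d else 0)) - LSE \<beta> I w - p * d\<bar> \<le> \<beta> * d\<^sup>2"
proof -
  have p: "0 \<le> p" "p \<le> 1" unfolding p_def using assms by (auto simp: softmax_nonneg softmax_le_1)
  note shift = LSE_add_single[OF assms(1-3), of w d, folded p_def]
  show "\<bar>LSE \<beta> I (\<lambda>j. w j + (if j = l then d else 0)) - LSE \<beta> I w\<bar> \<le> \<bar>d\<bar>"
    using abs_ln_convex_comb_exp_le[OF p, of "\<beta> * d"] assms(3)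
    by (simp add: shift abs_div abs_mult divide_le_eq mult.commute)
  assume "\<bar>\<beta> * d\<bar> \<le> 1"
  then have "\<bar>ln (1 - p + p * exp (\<beta> * d)) - p * (\<beta> * d)\<bar> \<le> (\<beta> * d)\<^sup>2"
    by (rule ln_convex_comb_exp_remainder[OF p])
  moreover have "LSE \<beta> I (\<lambda>j. w j + (if j = l then d else 0)) - LSE \<beta> I w - p * d
      = (ln (1 - p + p * exp (\<beta> * d)) - p * (\<beta> * d)) / \<beta>"
    using assms(3) by (simp add: shift field_simps)
  ultimately show "\<bar>LSE \<beta> I (\<lambda>j. w j + (if j = l then d else 0)) - LSE \<beta> I w - p * d\<bar> \<le> \<beta> * d\<^sup>2"
    using assms(3) by (simp add: abs_div divide_le_eq power2_eq_square algebra_simps)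
qed

lemma abs_LSE_le:
  fixes w :: "'i \<Rightarrow> real"
  assumes "finite I" "I \<noteq> {}" "0 < \<beta>"
  shows "\<bar>LSE \<beta> I w\<bar> \<le> (\<Sum>j\<in>I. \<bar>w j\<bar>) + ln (card I) / \<beta>"
proof -
  define Z where "Z = (\<Sum>j\<in>I. exp (\<beta> * w j))"
  define A where "A = (\<Sum>j\<in>I. \<bar>w j\<bar>)"
  obtain j where j: "j \<in> I" using assms(2) by auto
  have w_le: "\<bar>w i\<bar> \<le> A" if "i \<in> I" for i
    unfolding A_def using assms(1) that by (intro member_le_sum) auto
  have Z_pos: "0 < Z" unfolding Z_def using assms by (intro sum_pos) auto
  have "exp (\<beta> * w j) \<le> Z" unfolding Z_def using assms(1) j by (intro member_le_sum) auto
  then have "\<beta> * w j \<le> ln Z" using Z_pos by (simp add: ln_ge_iff)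
  moreover have "\<beta> * (- A) \<le> \<beta> * w j" using w_le[OF j] assms(3) by (intro mult_left_mono) auto
  ultimately have lower: "- A \<le> ln Z / \<beta>" using assms(3) by (simp add: field_simps)
  have "Z \<le> (\<Sum>i\<in>I. exp (\<beta> * A))"
    unfolding Z_def using w_le assms(3) by (intro sum_mono) (auto simp: abs_le_iff)
  also have "\<dots> = exp (ln (card I) + \<beta> * A)"
    using assms(1,2) by (simp add: exp_add card_gt_0_iff)
  finally have "ln Z \<le> ln (exp (ln (card I) + \<beta> * A))"
    using Z_pos by (simp only: ln_le_cancel_iff exp_gt_zero)
  then have "ln Z \<le> ln (card I) + \<beta> * A" by simp
  then have upper: "ln Z / \<beta> \<le> A + ln (card I) / \<beta>"
    using assms(3) by (simp add: field_simps)
  have "0 \<le> ln (card I) / \<beta>" using assms by (simp add: Suc_leI card_gt_0_iff)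
  then show ?thesis using lower upper unfolding LSE_def Z_def[symmetric] A_def[symmetric] by linarith
qed

lemma (in finite_measure) integral_LSE_add_single_remainder:
  fixes w :: "'a \<Rightarrow> 'i \<Rightarrow> real" and c :: "'a \<Rightarrow> real"
  assumes "finite I" "l \<in> I" "0 < \<beta>"
    and w_measurable[measurable]: "\<And>j. (\<lambda>x. w x j) \<in> borel_measurable M"
    and c_measurable[measurable]: "c \<in> borel_measurable M" and c_bounded: "\<And>x. \<bar>c x\<bar> \<le> C"
    and LSE_integrable: "integrable M (\<lambda>x. LSE \<beta> I (w x))"
    and small: "\<beta> * \<bar>h\<bar> * C \<le> 1"
  shows "\<bar>(\<integral>x. LSE \<beta> I (\<lambda>j. w x j + (if j = l then h * c x else 0)) \<partial>M) - (\<integral>x. LSE \<beta> I (w x) \<partial>M)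
      - (\<integral>x. softmax I (\<lambda>j. \<beta> * w x j) l * c x \<partial>M) * h\<bar> \<le> \<beta> * C\<^sup>2 * measure M (space M) * h\<^sup>2"
proof -
  define p where "p x = softmax I (\<lambda>j. \<beta> * w x j) l" for x
  define D where "D x = LSE \<beta> I (\<lambda>j. w x j + (if j = l then h * c x else 0)) - LSE \<beta> I (w x)" for x
  have p_bounds: "0 \<le> p x" "p x \<le> 1" for x
    unfolding p_def using assms by (auto simp: softmax_nonneg softmax_le_1)
  have hc_bounded: "\<bar>h * c x\<bar> \<le> \<bar>h\<bar> * C" for x
    using c_bounded[of x] by (simp add: abs_mult mult_left_mono)
  have D_integrable: "integrable M D"
  proof (rule integrable_const_bound[where B="\<bar>h\<bar> * C"])
    have "\<bar>D x\<bar> \<le> \<bar>h\<bar> * C" for x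
      unfolding D_def by (rule order_trans[OF LSE_add_single_lipschitz[OF assms(1-3)] hc_bounded])
    then show "AE x in M. norm (D x) \<le> \<bar>h\<bar> * C" by simp
    show "D \<in> borel_measurable M" unfolding D_def LSE_def by measurable
  qed
  have pc_integrable: "integrable M (\<lambda>x. p x * c x)"
  proof (rule integrable_const_bound[where B=C])
    show "AE x in M. norm (p x * c x) \<le> C"
      using p_bounds c_bounded
      by (intro AE_I2) (auto simp: abs_mult intro: order_trans[OF mult_left_le_one_le])
    show "(\<lambda>x. p x * c x) \<in> borel_measurable M" unfolding p_def softmax_def by measurable
  qed
  have pointwise: "\<bar>D x - p x * c x * h\<bar> \<le> \<beta> * C\<^sup>2 * h\<^sup>2" for x
  proof -
    have "\<bar>\<beta> * (h * c x)\<bar> = \<beta> * \<bar>h * c x\<bar>" using assms(3) by (simp add: abs_mult)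
    also have "\<dots> \<le> \<beta> * (\<bar>h\<bar> * C)" using hc_bounded[of x] assms(3) by (intro mult_left_mono) auto
    also have "\<dots> \<le> 1" using small by (simp add: mult.assoc)
    finally have "\<bar>\<beta> * (h * c x)\<bar> \<le> 1" .
    then have "\<bar>D x - p x * (h * c x)\<bar> \<le> \<beta> * (h * c x)\<^sup>2"
      unfolding D_def p_def by (rule LSE_add_single_remainder[OF assms(1-3)])
    also have "\<dots> \<le> \<beta> * (\<bar>h\<bar> * C)\<^sup>2"
      using hc_bounded[of x] assms(3) by (intro mult_left_mono) (auto simp: abs_le_square_iff[symmetric])
    finally show ?thesis by (simp add: algebra_simps power_mult_distrib)
  qed
  have "(\<integral>x. LSE \<beta> I (\<lambda>j. w x j + (if j = l then h * c x else 0)) \<partial>M)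
      = (\<integral>x. LSE \<beta> I (w x) + D x \<partial>M)" by (simp add: D_def)
  also have "\<dots> = (\<integral>x. LSE \<beta> I (w x) \<partial>M) + (\<integral>x. D x \<partial>M)"
    by (rule Bochner_Integration.integral_add[OF LSE_integrable D_integrable])
  finally have "\<bar>(\<integral>x. LSE \<beta> I (\<lambda>j. w x j + (if j = l then h * c x else 0)) \<partial>M) - (\<integral>x. LSE \<beta> I (w x) \<partial>M)
      - (\<integral>x. p x * c x \<partial>M) * h\<bar> = \<bar>\<integral>x. D x - p x * c x * h \<partial>M\<bar>"
    using D_integrable pc_integrable by simp
  also have "\<dots> \<le> (\<integral>x. \<beta> * C\<^sup>2 * h\<^sup>2 \<partial>M)"
    using D_integrable pc_integrable pointwise
    by (intro order_trans[OF integral_abs_bound] integral_mono) auto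
  finally show ?thesis unfolding p_def by (simp add: algebra_simps)
qed

lemma (in finite_measure) has_real_derivative_integral_LSE_add_single:
  fixes w :: "'a \<Rightarrow> 'i \<Rightarrow> real" and c :: "'a \<Rightarrow> real"
  assumes "finite I" "l \<in> I" "0 < \<beta>"
    and "\<And>j. (\<lambda>x. w x j) \<in> borel_measurable M"
    and "c \<in> borel_measurable M" and c_bounded: "\<And>x. \<bar>c x\<bar> \<le> C"
    and "integrable M (\<lambda>x. LSE \<beta> I (w x))"
  shows "((\<lambda>h. \<integral>x. LSE \<beta> I (\<lambda>j. w x j + (if j = l then h * c x else 0)) \<partial>M)
          has_real_derivative (\<integral>x. softmax I (\<lambda>j. \<beta> * w x j) l * c x \<partial>M)) (at 0)"
proof (rule has_real_derivative_at_0_if_quadratic_remainder)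
  have pos: "0 < \<beta> * (\<bar>C\<bar> + 1)" using assms(3) by (simp add: add_nonneg_pos)
  then show "0 < 1 / (\<beta> * (\<bar>C\<bar> + 1))" by simp
  fix h :: real assume "\<bar>h\<bar> < 1 / (\<beta> * (\<bar>C\<bar> + 1))"
  with pos have "\<beta> * \<bar>h\<bar> * (\<bar>C\<bar> + 1) < 1" by (simp add: less_divide_eq algebra_simps)
  moreover have "\<beta> * \<bar>h\<bar> * C \<le> \<beta> * \<bar>h\<bar> * (\<bar>C\<bar> + 1)" using assms(3) by (intro mult_left_mono) auto
  ultimately have "\<beta> * \<bar>h\<bar> * C \<le> 1" by linarith
  from integral_LSE_add_single_remainder[OF assms this]
  show "\<bar>(\<integral>x. LSE \<beta> I (\<lambda>j. w x j + (if j = l then h * c x else 0)) \<partial>M)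
      - (\<integral>x. LSE \<beta> I (\<lambda>j. w x j + (if j = l then 0 * c x else 0)) \<partial>M)
      - (\<integral>x. softmax I (\<lambda>j. \<beta> * w x j) l * c x \<partial>M) * h\<bar> \<le> \<beta> * C\<^sup>2 * measure M (space M) * h\<^sup>2"
    by (simp only: mult_zero_left if_cancel add_0_right)
qed

section \<open>The gradient of the smoothed dual objective\<close>

lemma finite_grid [simp]: "finite (grid L)"
  and grid_nonempty [simp]: "grid L \<noteq> {}"
  unfolding grid_def by auto

lemma sum_upd_row:
  assumes "finite A" "s \<in> A"
  shows "(\<Sum>s'\<in>A. upd \<Lambda> l s h j s' * t s') = (\<Sum>s'\<in>A. \<Lambda> j s' * t s') + (if j = l then h * t s else 0)"
proof -
  have "(\<Sum>s'\<in>A. upd \<Lambda> l s h j s' * t s')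
      = (\<Sum>s'\<in>A. \<Lambda> j s' * t s' + (if s' = s then (if j = l then h * t s else 0) else 0))"
    by (intro sum.cong) (auto simp: upd_def algebra_simps)
  then show ?thesis using assms by (simp add: sum.distrib)
qed

lemma sum_sum_upd:
  assumes "finite G" "finite A" "l \<in> G" "s \<in> A"
  shows "(\<Sum>l'\<in>G. \<Sum>s'\<in>A. upd \<Lambda> l s h l' s' * t s') = (\<Sum>l'\<in>G. \<Sum>s'\<in>A. \<Lambda> l' s' * t s') + h * t s"
  using assms by (simp add: sum_upd_row sum.distrib)

lemma score_upd_Lambda:
  "s \<in> {1..K} \<Longrightarrow> score K B L \<eta> th (upd \<Lambda> l s h) V x
     = (\<lambda>j. score K B L \<eta> th \<Lambda> V x j + (if j = l then h * th x s else 0))"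
  unfolding score_def left_diff_distrib sum_subtractf by (auto simp: sum_upd_row)

lemma score_upd_V:
  "s \<in> {1..K} \<Longrightarrow> score K B L \<eta> th \<Lambda> (upd V l s h) x
     = (\<lambda>j. score K B L \<eta> th \<Lambda> V x j + (if j = l then h * - th x s else 0))"
  unfolding score_def left_diff_distrib sum_subtractf by (auto simp: sum_upd_row)

lemma borel_measurable_score:
  assumes "\<eta> \<in> borel_measurable borel" "\<And>s. s \<in> {1..K} \<Longrightarrow> (\<lambda>x. th x s) \<in> borel_measurable borel"
  shows "(\<lambda>x. score K B L \<eta> th \<Lambda> V x j) \<in> borel_measurable borel"
proof -
  have [measurable]: "(\<lambda>x. \<Sum>s\<in>{1..K}. (\<Lambda> j s - V j s) * th x s) \<in> borel_measurable borel"
    using assms(2) by (intro borel_measurable_sum) auto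
  show ?thesis unfolding score_def using assms(1) by measurable
qed

lemma abs_score_le:
  assumes "\<And>s. s \<in> {1..K} \<Longrightarrow> \<bar>th x s\<bar> \<le> C s"
  shows "\<bar>score K B L \<eta> th \<Lambda> V x j\<bar>
    \<le> (\<Sum>s\<in>{1..K}. \<bar>\<Lambda> j s - V j s\<bar> * C s) + 2 * (\<eta> x)\<^sup>2 + 2 * (real_of_int j * B / real L)\<^sup>2"
proof -
  define r where "r = real_of_int j * B / real L"
  have "\<bar>\<Sum>s\<in>{1..K}. (\<Lambda> j s - V j s) * th x s\<bar> \<le> (\<Sum>s\<in>{1..K}. \<bar>\<Lambda> j s - V j s\<bar> * C s)"
    using assms by (intro order_trans[OF sum_abs] sum_mono) (auto simp: abs_mult intro: mult_left_mono)
  moreover have "(\<eta> x - r)\<^sup>2 \<le> 2 * (\<eta> x)\<^sup>2 + 2 * r\<^sup>2"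
    using zero_le_power2[of "\<eta> x + r"] by (simp add: power2_eq_square algebra_simps)
  ultimately show ?thesis
    unfolding score_def r_def[symmetric] using zero_le_power2[of "\<eta> x - r"] by linarith
qed

lemma integrable_LSE_score:
  fixes X :: "'w \<Rightarrow> 'x::topological_space"
  assumes "finite_measure M" and [measurable]: "X \<in> borel_measurable M" and "0 < \<beta>"
    and \<eta>: "\<eta> \<in> borel_measurable borel" and \<eta>_square: "integrable M (\<lambda>\<omega>. (\<eta> (X \<omega>))\<^sup>2)"
    and th: "\<And>s. s \<in> {1..K} \<Longrightarrow> (\<lambda>x. th x s) \<in> borel_measurable borel"
    and th_bounded: "\<And>x s. s \<in> {1..K} \<Longrightarrow> \<bar>th x s\<bar> \<le> C s"
  shows "integrable M (\<lambda>\<omega>. LSE \<beta> (grid L) (score K B L \<eta> th \<Lambda> V (X \<omega>)))"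
proof -
  interpret finite_measure M by (rule assms(1))
  define c where "c j = (\<Sum>s\<in>{1..K}. \<bar>\<Lambda> j s - V j s\<bar> * C s) + 2 * (real_of_int j * B / real L)\<^sup>2" for j
  define g where "g \<omega> = (\<Sum>j\<in>grid L. c j + 2 * (\<eta> (X \<omega>))\<^sup>2) + ln (card (grid L)) / \<beta>" for \<omega>
  have g_integrable: "integrable M g" unfolding g_def using \<eta>_square by auto
  have [measurable]: "(\<lambda>\<omega>. score K B L \<eta> th \<Lambda> V (X \<omega>) j) \<in> borel_measurable M" for j
    using borel_measurable_score[OF \<eta> th] by measurable
  then have LSE_measurable: "(\<lambda>\<omega>. LSE \<beta> (grid L) (score K B L \<eta> th \<Lambda> V (X \<omega>))) \<in> borel_measurable M"
    unfolding LSE_def by measurable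
  have LSE_bound: "\<bar>LSE \<beta> (grid L) (score K B L \<eta> th \<Lambda> V (X \<omega>))\<bar> \<le> g \<omega>" for \<omega>
    unfolding g_def using abs_score_le[of K th "X \<omega>" C, OF th_bounded] c_def
    by (intro order_trans[OF abs_LSE_le[OF finite_grid grid_nonempty assms(3)]] add_right_mono sum_mono)
      (auto simp: algebra_simps)
  show ?thesis
  proof (rule Bochner_Integration.integrable_bound[OF g_integrable LSE_measurable], intro AE_I2)
    show "norm (LSE \<beta> (grid L) (score K B L \<eta> th \<Lambda> V (X \<omega>))) \<le> norm (g \<omega>)" for \<omega>
      using LSE_bound[of \<omega>] abs_ge_self[of "g \<omega>"] by simp
  qed
qed

lemma borel_measurable_pihat:
  assumes "\<eta> \<in> borel_measurable borel" "\<And>s. s \<in> {1..K} \<Longrightarrow> (\<lambda>x. th x s) \<in> borel_measurable borel"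
  shows "(\<lambda>x. pihat K B L \<beta> \<eta> th \<Lambda> V x l) \<in> borel_measurable borel"
  unfolding pihat_def softmax_def using borel_measurable_score[OF assms] by measurable

lemma pihat_nonneg: "0 \<le> pihat K B L \<beta> \<eta> th \<Lambda> V x l"
  unfolding pihat_def by (rule softmax_nonneg)

lemma pihat_le_1: "l \<in> grid L \<Longrightarrow> pihat K B L \<beta> \<eta> th \<Lambda> V x l \<le> 1"
  unfolding pihat_def by (simp add: softmax_le_1)

lemma sum_pihat: "(\<Sum>l\<in>grid L. pihat K B L \<beta> \<eta> th \<Lambda> V x l) = 1"
  unfolding pihat_def by (simp add: sum_softmax)

lemma gradients_Fhat:
  fixes X :: "'w \<Rightarrow> 'x::topological_space"
  assumes "finite_measure M" and [measurable]: "X \<in> borel_measurable M"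
    and "0 < \<beta>" "l \<in> grid L" "s \<in> {1..K}"
    and \<eta>[measurable]: "\<eta> \<in> borel_measurable borel"
    and th: "\<And>s. s \<in> {1..K} \<Longrightarrow> (\<lambda>x. th x s) \<in> borel_measurable borel"
    and th_bounded: "\<And>x. \<bar>th x s\<bar> \<le> C"
    and LSE_integrable: "integrable M (\<lambda>\<omega>. LSE \<beta> (grid L) (score K B L \<eta> th \<Lambda> V (X \<omega>)))"
  defines "a \<equiv> \<integral>\<omega>. pihat K B L \<beta> \<eta> th \<Lambda> V (X \<omega>) l * th (X \<omega>) s \<partial>M"
  shows "gradL (Fhat M X K B L \<beta> \<epsilon> \<eta> th) \<Lambda> V l s = \<epsilon> s + a"
    and "gradV (Fhat M X K B L \<beta> \<epsilon> \<eta> th) \<Lambda> V l s = \<epsilon> s - a"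
proof -
  interpret finite_measure M by (rule assms(1))
  define w where "w \<omega> = score K B L \<eta> th \<Lambda> V (X \<omega>)" for \<omega>
  have w_measurable: "(\<lambda>\<omega>. w \<omega> j) \<in> borel_measurable M" for j
    unfolding w_def using borel_measurable_score[OF \<eta> th] by measurable
  have w_integrable: "integrable M (\<lambda>\<omega>. LSE \<beta> (grid L) (w \<omega>))"
    unfolding w_def by (rule LSE_integrable)
  have [measurable]: "(\<lambda>x. th x s) \<in> borel_measurable borel" by (rule th[OF assms(5)])
  define E where "E = (\<Sum>l'\<in>grid L. \<Sum>s'\<in>{1..K}. (\<Lambda> l' s' + V l' s') * \<epsilon> s')"
  have deriv: "((\<lambda>h. (\<integral>\<omega>. LSE \<beta> (grid L) (\<lambda>j. w \<omega> j + (if j = l then h * c (X \<omega>) else 0)) \<partial>M)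
      + (E + h * \<epsilon> s)) has_real_derivative (\<epsilon> s + (\<integral>\<omega>. pihat K B L \<beta> \<eta> th \<Lambda> V (X \<omega>) l * c (X \<omega>) \<partial>M))) (at 0)"
    if [measurable]: "c \<in> borel_measurable borel" and "\<And>x. \<bar>c x\<bar> \<le> C" for c
  proof -
    have "((\<lambda>h. \<integral>\<omega>. LSE \<beta> (grid L) (\<lambda>j. w \<omega> j + (if j = l then h * c (X \<omega>) else 0)) \<partial>M)
        has_real_derivative (\<integral>\<omega>. softmax (grid L) (\<lambda>j. \<beta> * w \<omega> j) l * c (X \<omega>) \<partial>M)) (at 0)"
      using assms(3,4) w_measurable w_integrable that(2)
      by (intro has_real_derivative_integral_LSE_add_single) auto
    then show ?thesis unfolding w_def pihat_def by (auto intro!: derivative_eq_intros)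
  qed
  have sums: "(\<Sum>l'\<in>grid L. \<Sum>s'\<in>{1..K}. (upd \<Lambda> l s h l' s' + V l' s') * \<epsilon> s') = E + h * \<epsilon> s"
    "(\<Sum>l'\<in>grid L. \<Sum>s'\<in>{1..K}. (\<Lambda> l' s' + upd V l s h l' s') * \<epsilon> s') = E + h * \<epsilon> s" for h
    using sum_sum_upd[OF finite_grid finite_atLeastAtMost assms(4,5), of \<Lambda> h \<epsilon>]
      sum_sum_upd[OF finite_grid finite_atLeastAtMost assms(4,5), of V h \<epsilon>]
    by (simp_all add: E_def distrib_right sum.distrib)
  have "((\<lambda>h. Fhat M X K B L \<beta> \<epsilon> \<eta> th (upd \<Lambda> l s h) V) has_real_derivative (\<epsilon> s + a)) (at 0)"
    using deriv[of "\<lambda>x. th x s"] th_bounded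
    unfolding Fhat_def score_upd_Lambda[OF assms(5)] sums w_def a_def by simp
  moreover have "((\<lambda>h. Fhat M X K B L \<beta> \<epsilon> \<eta> th \<Lambda> (upd V l s h)) has_real_derivative (\<epsilon> s - a)) (at 0)"
    using deriv[of "\<lambda>x. - th x s"] th_bounded
    unfolding Fhat_def score_upd_V[OF assms(5)] sums w_def a_def by simp
  ultimately show "gradL (Fhat M X K B L \<beta> \<epsilon> \<eta> th) \<Lambda> V l s = \<epsilon> s + a"
    and "gradV (Fhat M X K B L \<beta> \<epsilon> \<eta> th) \<Lambda> V l s = \<epsilon> s - a"
    by (simp_all add: gradL_def gradV_def DERIV_imp_deriv)
qed

lemma projected_gradient_step_eq:
  fixes \<alpha> \<mu> d :: real
  assumes "0 < \<alpha>" "0 \<le> \<mu>" "d < 0"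
  shows "(\<mu> - max 0 (\<mu> - \<alpha> * d)) / \<alpha> = d"
proof -
  have "0 \<le> \<mu> - \<alpha> * d" using assms mult_pos_neg[of \<alpha> d] by linarith
  then show ?thesis using assms(1) by simp
qed

lemma pos_part_square_le_projected_gradient_square:
  fixes a e \<alpha> \<mu> \<nu> :: real
  assumes "0 < \<alpha>" "0 \<le> \<mu>" "0 \<le> \<nu>"
  shows "(max 0 (\<bar>a\<bar> - e))\<^sup>2
    \<le> ((\<mu> - max 0 (\<mu> - \<alpha> * (e + a))) / \<alpha>)\<^sup>2 + ((\<nu> - max 0 (\<nu> - \<alpha> * (e - a))) / \<alpha>)\<^sup>2"
proof -
  consider "\<bar>a\<bar> \<le> e" | "e < \<bar>a\<bar>" "a < 0" | "e < \<bar>a\<bar>" "0 \<le> a" by linarith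
  then show ?thesis
  proof cases
    case 1
    then show ?thesis by (simp add: add_nonneg_nonneg)
  next
    case 2
    then have neg: "e + a < 0" and pos_part: "max 0 (\<bar>a\<bar> - e) = - (e + a)" by auto
    show ?thesis unfolding pos_part projected_gradient_step_eq[OF assms(1,2) neg] power2_minus by simp
  next
    case 3
    then have neg: "e - a < 0" and pos_part: "max 0 (\<bar>a\<bar> - e) = - (e - a)" by auto
    show ?thesis unfolding pos_part projected_gradient_step_eq[OF assms(1,3) neg] power2_minus by simp
  qed
qed

lemma gradmap_norm_lower_bound:
  assumes "0 < \<alpha>" and nonneg: "\<And>l s. l \<in> grid L \<Longrightarrow> s \<in> {1..K} \<Longrightarrow> 0 \<le> \<Lambda> l s \<and> 0 \<le> V l s"
    and gradL: "\<And>l s. l \<in> grid L \<Longrightarrow> s \<in> {1..K} \<Longrightarrow> gradL F \<Lambda> V l s = \<epsilon> s + a l s"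
    and gradV: "\<And>l s. l \<in> grid L \<Longrightarrow> s \<in> {1..K} \<Longrightarrow> gradV F \<Lambda> V l s = \<epsilon> s - a l s"
  shows "sqrt (\<Sum>l\<in>grid L. \<Sum>s\<in>{1..K}. (max 0 (\<bar>a l s\<bar> - \<epsilon> s))\<^sup>2) \<le> gradmap_norm K L F \<alpha> \<Lambda> V"
  unfolding gradmap_norm_def using nonneg
  by (intro real_sqrt_le_mono sum_mono)
    (simp add: gradL gradV pos_part_square_le_projected_gradient_square[OF assms(1)])

section \<open>Unfairness and the estimation error of the conditional probabilities\<close>

lemma distr_density_cond_prob:
  fixes X :: "'w \<Rightarrow> 'x::topological_space"
  assumes "finite_measure M" and [measurable]: "X \<in> borel_measurable M"
    and [measurable]: "S \<in> measurable M (count_space UNIV)"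
    and "is_cond_prob M X S K \<tau>" "s \<in> {1..K}"
  shows "distr (density M (\<lambda>\<omega>. ennreal (indicator {\<omega> \<in> space M. S \<omega> = s} \<omega>))) borel X
    = density (distr M borel X) (\<lambda>x. ennreal (\<tau> x s))"
    (is "distr ?N borel X = _")
proof (rule measure_eqI)
  interpret finite_measure M by (rule assms(1))
  have [measurable]: "(\<lambda>x. \<tau> x s) \<in> borel_measurable borel"
    and \<tau>_bounds: "\<And>x. 0 \<le> \<tau> x s \<and> \<tau> x s \<le> 1"
    and \<tau>_cond: "\<And>A. A \<in> sets borel \<Longrightarrow> measure M {\<omega> \<in> space M. S \<omega> = s \<and> X \<omega> \<in> A}
                          = (\<integral>\<omega>. \<tau> (X \<omega>) s * indicator A (X \<omega>) \<partial>M)"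
    using assms(4,5) unfolding is_cond_prob_def by auto
  define S' where "S' = {\<omega> \<in> space M. S \<omega> = s}"
  have [measurable]: "S' \<in> sets M" unfolding S'_def by measurable
  fix A assume "A \<in> sets (distr ?N borel X)"
  then have A[measurable]: "A \<in> sets borel" by simp
  have "emeasure (distr ?N borel X) A = (\<integral>\<^sup>+ \<omega>. ennreal (indicator S' \<omega>) * indicator (X -` A \<inter> space M) \<omega> \<partial>M)"
    by (simp add: emeasure_distr emeasure_density S'_def)
  also have "\<dots> = (\<integral>\<^sup>+ \<omega>. indicator (S' \<inter> (X -` A \<inter> space M)) \<omega> \<partial>M)"
    by (intro nn_integral_cong) (auto simp: indicator_def)
  also have "\<dots> = emeasure M (S' \<inter> (X -` A \<inter> space M))" by simp
  also have "\<dots> = ennreal (\<integral>\<omega>. \<tau> (X \<omega>) s * indicator A (X \<omega>) \<partial>M)"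
  proof -
    have "S' \<inter> (X -` A \<inter> space M) = {\<omega> \<in> space M. S \<omega> = s \<and> X \<omega> \<in> A}" by (auto simp: S'_def)
    then show ?thesis using \<tau>_cond[OF A] by (simp add: emeasure_eq_measure)
  qed
  also have "\<dots> = (\<integral>\<^sup>+ \<omega>. ennreal (\<tau> (X \<omega>) s * indicator A (X \<omega>)) \<partial>M)"
    using \<tau>_bounds
    by (intro nn_integral_eq_integral[symmetric] integrable_const_bound[where B=1])
      (auto simp: indicator_def)
  also have "\<dots> = emeasure (density (distr M borel X) (\<lambda>x. ennreal (\<tau> x s))) A"
    by (simp add: emeasure_density nn_integral_distr indicator_mult_ennreal mult.commute)
  finally show "emeasure (distr ?N borel X) A = emeasure (density (distr M borel X) (\<lambda>x. ennreal (\<tau> x s))) A" .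
qed simp

lemma integral_mult_cond_prob:
  fixes X :: "'w \<Rightarrow> 'x::topological_space" and g :: "'x \<Rightarrow> real"
  assumes "finite_measure M" and [measurable]: "X \<in> borel_measurable M"
    and [measurable]: "S \<in> measurable M (count_space UNIV)"
    and "is_cond_prob M X S K \<tau>" "s \<in> {1..K}"
    and [measurable]: "g \<in> borel_measurable borel"
  shows "(\<integral>\<omega>. g (X \<omega>) * \<tau> (X \<omega>) s \<partial>M)
       = (\<integral>\<omega>. g (X \<omega>) * indicator {\<omega>' \<in> space M. S \<omega>' = s} \<omega> \<partial>M)"
proof -
  have [measurable]: "(\<lambda>x. \<tau> x s) \<in> borel_measurable borel" and "\<And>x. 0 \<le> \<tau> x s"
    using assms(4,5) unfolding is_cond_prob_def by auto
  then have "(\<integral>\<omega>. g (X \<omega>) * \<tau> (X \<omega>) s \<partial>M) = (\<integral>x. g x \<partial>density (distr M borel X) (\<lambda>x. ennreal (\<tau> x s)))"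
    by (simp add: integral_density integral_distr mult.commute)
  also have "\<dots> = (\<integral>x. g x \<partial>distr (density M (\<lambda>\<omega>. ennreal (indicator {\<omega>' \<in> space M. S \<omega>' = s} \<omega>))) borel X)"
    by (simp add: distr_density_cond_prob[OF assms(1-5)])
  also have "\<dots> = (\<integral>\<omega>. g (X \<omega>) * indicator {\<omega>' \<in> space M. S \<omega>' = s} \<omega> \<partial>M)"
    by (simp add: integral_distr integral_density mult.commute)
  finally show ?thesis .
qed

lemma tfun_measurable_bounded:
  assumes "(\<lambda>x. \<tau> x s) \<in> borel_measurable borel" "\<And>x. 0 \<le> \<tau> x s \<and> \<tau> x s \<le> 1" "0 < p s"
  shows "(\<lambda>x. tfun p \<tau> x s) \<in> borel_measurable borel" "\<bar>tfun p \<tau> x s\<bar> \<le> 1 + 1 / p s"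
proof -
  show "(\<lambda>x. tfun p \<tau> x s) \<in> borel_measurable borel" unfolding tfun_def using assms(1) by measurable
  have "0 \<le> \<tau> x s / p s" "\<tau> x s / p s \<le> 1 / p s"
    using assms(2,3) by (auto simp: divide_right_mono)
  then show "\<bar>tfun p \<tau> x s\<bar> \<le> 1 + 1 / p s" unfolding tfun_def by (simp add: abs_le_iff)
qed

lemma unfair_eq_abs_integral_tfun:
  fixes X :: "'w \<Rightarrow> 'x::topological_space"
  assumes "finite_measure M" and [measurable]: "X \<in> borel_measurable M"
    and [measurable]: "S \<in> measurable M (count_space UNIV)"
    and "is_cond_prob M X S K \<tau>" "s \<in> {1..K}"
    and \<pi>[measurable]: "(\<lambda>x. \<pi> x l) \<in> borel_measurable borel" and \<pi>_bounded: "\<And>x. \<bar>\<pi> x l\<bar> \<le> 1"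
  shows "unfair M X S \<pi> s l = \<bar>\<integral>\<omega>. \<pi> (X \<omega>) l * tfun (pS M S) \<tau> (X \<omega>) s \<partial>M\<bar>"
proof -
  interpret finite_measure M by (rule assms(1))
  have [measurable]: "(\<lambda>x. \<tau> x s) \<in> borel_measurable borel" and \<tau>_bounds: "0 \<le> \<tau> x s" "\<tau> x s \<le> 1" for x
    using assms(4,5) unfolding is_cond_prob_def by auto
  have "integrable M (\<lambda>\<omega>. \<pi> (X \<omega>) l)"
    using \<pi>_bounded by (intro integrable_const_bound[where B=1]) auto
  moreover have "integrable M (\<lambda>\<omega>. \<pi> (X \<omega>) l * \<tau> (X \<omega>) s / pS M S s)"
    using \<pi>_bounded \<tau>_bounds
    by (intro integrable_divide_zero integrable_const_bound[where B=1]) (auto simp: abs_mult mult_le_one)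
  ultimately have "(\<integral>\<omega>. \<pi> (X \<omega>) l * tfun (pS M S) \<tau> (X \<omega>) s \<partial>M)
      = (\<integral>\<omega>. \<pi> (X \<omega>) l \<partial>M) - (\<integral>\<omega>. \<pi> (X \<omega>) l * \<tau> (X \<omega>) s \<partial>M) / pS M S s"
    by (simp add: tfun_def right_diff_distrib)
  then show ?thesis
    unfolding unfair_def integral_mult_cond_prob[OF assms(1-5) \<pi>] by linarith
qed

lemma (in prob_space) square_weighted_integral_diff_le:
  fixes \<pi> f g :: "'a \<Rightarrow> real"
  assumes [measurable]: "\<pi> \<in> borel_measurable M" "f \<in> borel_measurable M" "g \<in> borel_measurable M"
    and \<pi>_bounds: "\<And>x. 0 \<le> \<pi> x \<and> \<pi> x \<le> 1"
    and f_bounded: "\<And>x. \<bar>f x\<bar> \<le> C" and g_bounded: "\<And>x. \<bar>g x\<bar> \<le> C"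
  shows "((\<integral>x. \<pi> x * f x \<partial>M) - (\<integral>x. \<pi> x * g x \<partial>M))\<^sup>2 \<le> (\<integral>x. \<pi> x * (f x - g x)\<^sup>2 \<partial>M)"
proof -
  have bounded_integrable: "integrable M h"
    if "h \<in> borel_measurable M" "\<And>x. \<bar>h x\<bar> \<le> c" for h :: "'a \<Rightarrow> real" and c
    using that by (intro integrable_const_bound[where B=c]) auto
  have weighted_bounded: "\<bar>\<pi> x * h\<bar> \<le> c" if "\<bar>h\<bar> \<le> c" for x h c
    using mult_mono[of "\<pi> x" 1 "\<bar>h\<bar>" c] \<pi>_bounds[of x] that by (simp add: abs_mult)
  define Z where "Z x = \<pi> x * (f x - g x)" for x
  have diff_bounded: "\<bar>f x - g x\<bar> \<le> 2 * C" for x using f_bounded[of x] g_bounded[of x] by linarith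
  then have Z_bounded: "\<bar>Z x\<bar> \<le> 2 * C" for x unfolding Z_def by (rule weighted_bounded)
  have Z_integrable: "integrable M Z" by (rule bounded_integrable[OF _ Z_bounded]) (simp add: Z_def)
  have Z_square_integrable: "integrable M (\<lambda>x. (Z x)\<^sup>2)"
    using power_mono[OF Z_bounded abs_ge_zero, of _ 2]
    by (intro bounded_integrable[of _ "(2 * C)\<^sup>2"]) (auto simp: Z_def)
  have "integrable M (\<lambda>x. \<pi> x * f x)" "integrable M (\<lambda>x. \<pi> x * g x)"
    using f_bounded g_bounded by (auto intro!: bounded_integrable[of _ C] weighted_bounded)
  then have "((\<integral>x. \<pi> x * f x \<partial>M) - (\<integral>x. \<pi> x * g x \<partial>M))\<^sup>2 = (\<integral>x. Z x \<partial>M)\<^sup>2"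
    unfolding Z_def right_diff_distrib by simp
  also have "\<dots> \<le> (\<integral>x. (Z x)\<^sup>2 \<partial>M)"
    using variance_eq[OF Z_integrable Z_square_integrable] variance_positive[of Z] by simp
  also have "\<dots> \<le> (\<integral>x. \<pi> x * (f x - g x)\<^sup>2 \<partial>M)"
  proof (rule integral_mono[OF Z_square_integrable])
    show "integrable M (\<lambda>x. \<pi> x * (f x - g x)\<^sup>2)"
      using power_mono[OF diff_bounded abs_ge_zero, of _ 2]
      by (intro bounded_integrable[of _ "(2 * C)\<^sup>2"] weighted_bounded) auto
    fix x
    have "(\<pi> x)\<^sup>2 \<le> \<pi> x" using \<pi>_bounds[of x] by (simp add: power2_eq_square mult_left_le_one_le)
    then show "(Z x)\<^sup>2 \<le> \<pi> x * (f x - g x)\<^sup>2"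
      unfolding Z_def power_mult_distrib by (intro mult_right_mono) auto
  qed
  finally show ?thesis .
qed

lemma (in prob_space) sum_square_weighted_integral_diff_le:
  fixes \<pi> :: "'a \<Rightarrow> 'l \<Rightarrow> real" and f g :: "'a \<Rightarrow> 's \<Rightarrow> real"
  assumes "finite G" "finite A"
    and \<pi>_measurable: "\<And>l. l \<in> G \<Longrightarrow> (\<lambda>x. \<pi> x l) \<in> borel_measurable M"
    and \<pi>_nonneg: "\<And>x l. l \<in> G \<Longrightarrow> 0 \<le> \<pi> x l" and \<pi>_sum: "\<And>x. (\<Sum>l\<in>G. \<pi> x l) = 1"
    and f_measurable: "\<And>s. s \<in> A \<Longrightarrow> (\<lambda>x. f x s) \<in> borel_measurable M"
    and g_measurable: "\<And>s. s \<in> A \<Longrightarrow> (\<lambda>x. g x s) \<in> borel_measurable M"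
    and f_bounded: "\<And>x s. s \<in> A \<Longrightarrow> \<bar>f x s\<bar> \<le> C s"
    and g_bounded: "\<And>x s. s \<in> A \<Longrightarrow> \<bar>g x s\<bar> \<le> C s"
  shows "(\<Sum>l\<in>G. \<Sum>s\<in>A. ((\<integral>x. \<pi> x l * f x s \<partial>M) - (\<integral>x. \<pi> x l * g x s \<partial>M))\<^sup>2)
    \<le> (\<integral>x. (\<Sum>s\<in>A. (f x s - g x s)\<^sup>2) \<partial>M)"
proof -
  have \<pi>_bounds: "0 \<le> \<pi> x l \<and> \<pi> x l \<le> 1" if "l \<in> G" for x l
    using member_le_sum[of l G "\<pi> x"] assms(1) \<pi>_nonneg that by (simp add: \<pi>_sum)
  have term_integrable: "integrable M (\<lambda>x. \<pi> x l * (f x s - g x s)\<^sup>2)" if "l \<in> G" "s \<in> A" for l s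
  proof (rule integrable_const_bound[where B="(2 * C s)\<^sup>2"])
    have "\<bar>f x s - g x s\<bar> \<le> 2 * C s" for x using f_bounded[OF that(2), of x] g_bounded[OF that(2), of x] by linarith
    from power_mono[OF this abs_ge_zero, of _ 2] \<pi>_bounds[OF that(1)]
    show "AE x in M. norm (\<pi> x l * (f x s - g x s)\<^sup>2) \<le> (2 * C s)\<^sup>2"
      by (intro AE_I2) (simp add: abs_mult mult_le_one order_trans[OF mult_left_le_one_le])
    show "(\<lambda>x. \<pi> x l * (f x s - g x s)\<^sup>2) \<in> borel_measurable M"
      using that \<pi>_measurable f_measurable g_measurable by auto
  qed
  have "(\<Sum>l\<in>G. \<Sum>s\<in>A. ((\<integral>x. \<pi> x l * f x s \<partial>M) - (\<integral>x. \<pi> x l * g x s \<partial>M))\<^sup>2)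
      \<le> (\<Sum>l\<in>G. \<Sum>s\<in>A. (\<integral>x. \<pi> x l * (f x s - g x s)\<^sup>2 \<partial>M))"
    using \<pi>_measurable f_measurable g_measurable \<pi>_bounds f_bounded g_bounded
    by (intro sum_mono square_weighted_integral_diff_le[where C="C s" for s]) auto
  also have "\<dots> = (\<integral>x. (\<Sum>l\<in>G. \<Sum>s\<in>A. \<pi> x l * (f x s - g x s)\<^sup>2) \<partial>M)"
    using term_integrable by (simp add: Bochner_Integration.integral_sum Bochner_Integration.integrable_sum)
  also have "\<dots> = (\<integral>x. (\<Sum>s\<in>A. (f x s - g x s)\<^sup>2) \<partial>M)"
    by (intro Bochner_Integration.integral_cong refl, subst sum.swap)
      (simp add: sum_distrib_right[symmetric] \<pi>_sum)
  finally show ?thesis .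
qed

lemma sqrt_double_sum_squares_triangle:
  fixes f g h :: "'a \<Rightarrow> 'b \<Rightarrow> real"
  assumes "finite A" "finite B"
    and "\<And>a b. a \<in> A \<Longrightarrow> b \<in> B \<Longrightarrow> \<bar>f a b\<bar> \<le> \<bar>g a b\<bar> + \<bar>h a b\<bar>"
  shows "sqrt (\<Sum>a\<in>A. \<Sum>b\<in>B. (f a b)\<^sup>2)
    \<le> sqrt (\<Sum>a\<in>A. \<Sum>b\<in>B. (g a b)\<^sup>2) + sqrt (\<Sum>a\<in>A. \<Sum>b\<in>B. (h a b)\<^sup>2)"
proof -
  have L2: "sqrt (\<Sum>a\<in>A. \<Sum>b\<in>B. (k a b)\<^sup>2) = L2_set (\<lambda>x. \<bar>case_prod k x\<bar>) (A \<times> B)"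
    for k :: "'a \<Rightarrow> 'b \<Rightarrow> real"
    by (simp add: L2_set_def sum.cartesian_product split_def)
  have "L2_set (\<lambda>x. \<bar>case_prod f x\<bar>) (A \<times> B) \<le> L2_set (\<lambda>x. \<bar>case_prod g x\<bar> + \<bar>case_prod h x\<bar>) (A \<times> B)"
    using assms by (intro L2_set_mono) auto
  also have "\<dots> \<le> L2_set (\<lambda>x. \<bar>case_prod g x\<bar>) (A \<times> B) + L2_set (\<lambda>x. \<bar>case_prod h x\<bar>) (A \<times> B)"
    by (rule L2_set_triangle_ineq)
  finally show ?thesis unfolding L2 by (simp add: L2_set_def)
qed

theorem lemma5p1:
  fixes M :: "'w measure"
    and X :: "'w \<Rightarrow> 'x::euclidean_space" and S :: "'w \<Rightarrow> nat" and Y :: "'w \<Rightarrow> real"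
    and K L :: nat and B \<beta> \<alpha> :: real and \<epsilon> :: "nat \<Rightarrow> real"
    and \<tau> \<tau>h :: "'x \<Rightarrow> nat \<Rightarrow> real" and \<eta>h :: "'x \<Rightarrow> real"
    and \<Lambda> V :: "int \<Rightarrow> nat \<Rightarrow> real"
  assumes "prob_space M"
    and "X \<in> borel_measurable M" and "S \<in> measurable M (count_space UNIV)" and "Y \<in> borel_measurable M"
    and "\<forall>\<omega>\<in>space M. S \<omega> \<in> {1..K}"
    and "K \<ge> 2" and "L \<ge> 1" and "B > 0" and "\<beta> > 0" and "\<alpha> > 0"
    and "\<forall>s\<in>{1..K}. pS M S s > 0"
    and "is_cond_prob M X S K \<tau>"
    and "\<forall>s\<in>{1..K}. 0 \<le> \<epsilon> s \<and> \<epsilon> s \<le> 1"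
    and "\<eta>h \<in> borel_measurable borel" and "integrable M (\<lambda>\<omega>. (\<eta>h (X \<omega>))\<^sup>2)"
    and "\<forall>s\<in>{1..K}. (\<lambda>x. \<tau>h x s) \<in> borel_measurable borel \<and> (\<forall>x. 0 \<le> \<tau>h x s \<and> \<tau>h x s \<le> 1)"
    and "\<forall>l\<in>grid L. \<forall>s\<in>{1..K}. \<Lambda> l s \<ge> 0 \<and> V l s \<ge> 0"
  shows "sqrt (\<Sum>l\<in>grid L. \<Sum>s\<in>{1..K}.
            (max 0 (unfair M X S (pihat K B L \<beta> \<eta>h (tfun (pS M S) \<tau>h) \<Lambda> V) s l - \<epsilon> s))\<^sup>2)
         \<le> gradmap_norm K L (Fhat M X K B L \<beta> \<epsilon> \<eta>h (tfun (pS M S) \<tau>h)) \<alpha> \<Lambda> V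
           + sqrt (\<integral>\<omega>. (\<Sum>s\<in>{1..K}. (tfun (pS M S) \<tau>h (X \<omega>) s - tfun (pS M S) \<tau> (X \<omega>) s)\<^sup>2) \<partial>M)"
proof -
  interpret prob_space M by (rule assms(1))
  define p where "p = pS M S"
  define th where "th = tfun p \<tau>h"
  define t where "t = tfun p \<tau>"
  define \<pi> where "\<pi> = pihat K B L \<beta> \<eta>h th \<Lambda> V"
  define a where "a l s = (\<integral>\<omega>. \<pi> (X \<omega>) l * th (X \<omega>) s \<partial>M)" for l s
  define b where "b l s = (\<integral>\<omega>. \<pi> (X \<omega>) l * t (X \<omega>) s \<partial>M)" for l s
  have th: "(\<lambda>x. th x s) \<in> borel_measurable borel" "\<bar>th x s\<bar> \<le> 1 + 1 / p s"
    and t: "(\<lambda>x. t x s) \<in> borel_measurable borel" "\<bar>t x s\<bar> \<le> 1 + 1 / p s" if "s \<in> {1..K}" for s x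
    using that assms(11,12,16) unfolding th_def t_def p_def is_cond_prob_def
    by (auto intro!: tfun_measurable_bounded)
  have \<pi>: "(\<lambda>x. \<pi> x l) \<in> borel_measurable borel" "0 \<le> \<pi> x l" "\<pi> x l \<le> 1" if "l \<in> grid L" for x l
    unfolding \<pi>_def using that borel_measurable_pihat[OF assms(14) th(1)]
    by (simp_all add: pihat_nonneg pihat_le_1)
  have \<pi>_sum: "(\<Sum>l\<in>grid L. \<pi> x l) = 1" for x
    unfolding \<pi>_def by (rule sum_pihat)
  have "integrable M (\<lambda>\<omega>. LSE \<beta> (grid L) (score K B L \<eta>h th \<Lambda> V (X \<omega>)))"
    using th by (intro integrable_LSE_score[OF finite_measure assms(2,9,14,15)])
  then have "gradL (Fhat M X K B L \<beta> \<epsilon> \<eta>h th) \<Lambda> V l s = \<epsilon> s + a l s"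
    "gradV (Fhat M X K B L \<beta> \<epsilon> \<eta>h th) \<Lambda> V l s = \<epsilon> s - a l s" if "l \<in> grid L" "s \<in> {1..K}" for l s
    using that th unfolding a_def \<pi>_def
    by (intro gradients_Fhat[OF finite_measure assms(2,9) _ _ assms(14)]; auto)+
  then have gradmap_norm: "sqrt (\<Sum>l\<in>grid L. \<Sum>s\<in>{1..K}. (max 0 (\<bar>a l s\<bar> - \<epsilon> s))\<^sup>2)
      \<le> gradmap_norm K L (Fhat M X K B L \<beta> \<epsilon> \<eta>h th) \<alpha> \<Lambda> V"
    using assms(10,17) by (intro gradmap_norm_lower_bound) auto
  have unfair: "unfair M X S \<pi> s l = \<bar>b l s\<bar>" if "l \<in> grid L" "s \<in> {1..K}" for l s
    unfolding b_def t_def p_def using that \<pi>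
    by (intro unfair_eq_abs_integral_tfun[OF finite_measure assms(2,3,12)]) auto
  have estimation_error: "(\<Sum>l\<in>grid L. \<Sum>s\<in>{1..K}. (a l s - b l s)\<^sup>2)
      \<le> (\<integral>\<omega>. (\<Sum>s\<in>{1..K}. (th (X \<omega>) s - t (X \<omega>) s)\<^sup>2) \<partial>M)"
    unfolding a_def b_def using \<pi> \<pi>_sum th t
    by (intro sum_square_weighted_integral_diff_le[where C="\<lambda>s. 1 + 1 / p s"])
      (auto intro: measurable_compose[OF assms(2)])
  have "sqrt (\<Sum>l\<in>grid L. \<Sum>s\<in>{1..K}. (max 0 (unfair M X S \<pi> s l - \<epsilon> s))\<^sup>2)
      = sqrt (\<Sum>l\<in>grid L. \<Sum>s\<in>{1..K}. (max 0 (\<bar>b l s\<bar> - \<epsilon> s))\<^sup>2)"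
    using unfair by simp
  also have "\<dots> \<le> sqrt (\<Sum>l\<in>grid L. \<Sum>s\<in>{1..K}. (max 0 (\<bar>a l s\<bar> - \<epsilon> s))\<^sup>2)
        + sqrt (\<Sum>l\<in>grid L. \<Sum>s\<in>{1..K}. (a l s - b l s)\<^sup>2)"
    by (intro sqrt_double_sum_squares_triangle finite_grid finite_atLeastAtMost) linarith
  also have "\<dots> \<le> gradmap_norm K L (Fhat M X K B L \<beta> \<epsilon> \<eta>h th) \<alpha> \<Lambda> V
        + sqrt (\<integral>\<omega>. (\<Sum>s\<in>{1..K}. (th (X \<omega>) s - t (X \<omega>) s)\<^sup>2) \<partial>M)"
    using gradmap_norm real_sqrt_le_mono[OF estimation_error] by (rule add_mono)
  finally show ?thesis unfolding \<pi>_def th_def t_def p_def .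
qed

end
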